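(* Let $R$ be a Jacobi-Tsankov algebraic curvature tensor on $V$. Assume that $r(x)<m-1$ for all $x\in V$. Let $x\in S(V)$. Choose $y\in S(x^\perp)$ so that $J(x)y=0$. Then: \begin{enumerate} \item $J(y)x=0$ and $J(x)J(y)=0$. \item $0=J(y)^2+J(x)^2-4J(x,y)^2$, $J(x,y)J(x)=J(y)J(x,y)$, and $J(x)J(x,y)=J(x,y)J(y)$. \item Let $\{x,z_1,z_2\}$ be an orthonormal set. Suppose that $J(x)z_1=\lambda_1z_1$ and $J(x)z_2=\lambda_2z_2$ where $\lambda_1\ne\lambda_2$. Then $J(z_1)z_2=0$. \item We can choose an orthonormal basis for $V$ so that, in block form, $$ J(x)=\begin{pmatrix} A&0&0\\ 0&0&0\\ 0&0&0\end{pmatrix},\quad J(y)=\begin{pmatrix} 0&0&0\\ 0&A&0\\ 0&0&0\end{pmatrix},\quad J(x,y)=\frac12\begin{pmatrix} 0&A&0\\ A&0&0\\ 0&0&0\end{pmatrix}, $$ where $A=\operatorname{diag}(\lambda_1,\dots,\lambda_r)$ is the diagonal matrix of the non-zero eigenvalues of $J(x)$. \end{enumerate}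
   Context: $V$ is a real vector space of dimension $m\ge3$ with a positive definite inner product $\langle\cdot,\cdot\rangle$, and $S(V)=\{\xi\in V:\langle\xi,\xi\rangle=1\}$ is its unit sphere. $R\in\otimes^4V^*$ is an algebraic curvature tensor, i.e. $R(x,y,z,w)=R(z,w,x,y)=-R(y,x,z,w)$ and $R(x,y,z,w)+R(y,z,x,w)+R(z,x,y,w)=0$. The curvature operator $\mathcal{R}(x,y)$ is defined by $\langle\mathcal{R}(x,y)z,w\rangle=R(x,y,z,w)$, and the Jacobi operator is $J(x):y\mapsto\mathcal{R}(y,x)x$. $R$ is called Jacobi-Tsankov if $X\perp Y$ implies $J(X)J(Y)=J(Y)J(X)$. The polarized Jacobi operator is the self-adjoint operator $J(x,y):z\mapsto\frac12\mathcal{R}(z,x)y+\frac12\mathcal{R}(z,y)x$, so $J(x)=J(x,x)$. Finally $r(x):=\operatorname{Rank}\{J(x)\}$ (always $r(x)\le m-1$ since $J(x)x=0$). *)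

theory Defs
  imports "HOL-Analysis.Analysis"
begin

text \<open>V is modelled by a Euclidean space type 'a (finite dimensional real inner
product space); m = DIM('a). A 4-tensor R on V is a real function of four
vector arguments, linear in each.\<close>

definition multilinear4 :: "('a::real_vector \<Rightarrow> 'a \<Rightarrow> 'a \<Rightarrow> 'a \<Rightarrow> real) \<Rightarrow> bool" where
  "multilinear4 R \<longleftrightarrow>
     (\<forall>y z w. linear (\<lambda>x. R x y z w)) \<and> (\<forall>x z w. linear (\<lambda>y. R x y z w)) \<and>
     (\<forall>x y w. linear (\<lambda>z. R x y z w)) \<and> (\<forall>x y z. linear (\<lambda>w. R x y z w))"

definition alg_curv_tensor :: "('a::real_vector \<Rightarrow> 'a \<Rightarrow> 'a \<Rightarrow> 'a \<Rightarrow> real) \<Rightarrow> bool" where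
  "alg_curv_tensor R \<longleftrightarrow> multilinear4 R \<and>
     (\<forall>x y z w. R x y z w = R z w x y) \<and>
     (\<forall>x y z w. R x y z w = - R y x z w) \<and>
     (\<forall>x y z w. R x y z w + R y z x w + R z x y w = 0)"

definition curv_op :: "('a::euclidean_space \<Rightarrow> 'a \<Rightarrow> 'a \<Rightarrow> 'a \<Rightarrow> real) \<Rightarrow> 'a \<Rightarrow> 'a \<Rightarrow> 'a \<Rightarrow> 'a" where
  "curv_op R x y z = (\<Sum>b\<in>Basis. R x y z b *\<^sub>R b)"

definition jacobi_op :: "('a::euclidean_space \<Rightarrow> 'a \<Rightarrow> 'a \<Rightarrow> 'a \<Rightarrow> real) \<Rightarrow> 'a \<Rightarrow> 'a \<Rightarrow> 'a" where
  "jacobi_op R x y = curv_op R y x x"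

definition pjacobi_op :: "('a::euclidean_space \<Rightarrow> 'a \<Rightarrow> 'a \<Rightarrow> 'a \<Rightarrow> real) \<Rightarrow> 'a \<Rightarrow> 'a \<Rightarrow> 'a \<Rightarrow> 'a" where
  "pjacobi_op R x y z = (1/2) *\<^sub>R curv_op R z x y + (1/2) *\<^sub>R curv_op R z y x"

definition jacobi_tsankov :: "('a::euclidean_space \<Rightarrow> 'a \<Rightarrow> 'a \<Rightarrow> 'a \<Rightarrow> real) \<Rightarrow> bool" where
  "jacobi_tsankov R \<longleftrightarrow>
     (\<forall>X Y. X \<bullet> Y = 0 \<longrightarrow> jacobi_op R X \<circ> jacobi_op R Y = jacobi_op R Y \<circ> jacobi_op R X)"

definition jrank :: "('a::euclidean_space \<Rightarrow> 'a \<Rightarrow> 'a \<Rightarrow> 'a \<Rightarrow> real) \<Rightarrow> 'a \<Rightarrow> nat" where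
  "jrank R x = dim (range (jacobi_op R x))"

end

theory Submission
  imports Defs
begin

text \<open>
  Since R is Jacobi-Tsankov, J(x) commutes with J(u) and with J(u,v) whenever u and v are
  orthogonal to x. Testing J(x) J(y,w) = J(y,w) J(x) against y gives J(y) J(x) = 0, and letting
  J(x+y) commute with J(y-x) (orthogonal because |x| = |y|) gives J(y)x = 0. Then R vanishes
  on the plane spanned by x and y, so every rotated pair u = a x + b y, w = -b x + a y again
  satisfies J(u)w = 0, hence J(w) J(u) = 0; the coefficients of this binary quartic in (a, b) are
  the identities (2). For (3), J(z1)z2 and J(z2,z1)z1 are eigenvectors of J(x) for the distinct
  eigenvalues l2 and l1, so they are orthogonal, while their inner product is -|J(z1)z2|^2/2.
  For (4), diagonalise J(x): for a unit eigenvector h with eigenvalue l \<noteq> 0, the vector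
  (2/l) J(x,y) h is a unit eigenvector of J(y) with eigenvalue l, and on the orthogonal complement
  of all these pairs J(x) vanishes, J(y) is nilpotent and self-adjoint, hence zero, and then so
  is J(x,y).
\<close>

section \<open>Linear algebra\<close>

lemma quadratic_nonpos_linear_coeff_zero:
  fixes \<alpha> \<beta> :: real
  assumes "\<And>t. 2 * t * \<alpha> + t * t * \<beta> \<le> 0"
  shows "\<alpha> = 0"
proof (rule ccontr)
  assume "\<alpha> \<noteq> 0"
  define d where "d = \<bar>\<beta>\<bar> + 1"
  have "d > 0" and "2 * d + \<beta> > 0"
    by (auto simp: d_def abs_if)
  have "(2 * (\<alpha> / d) * \<alpha> + (\<alpha> / d) * (\<alpha> / d) * \<beta>) * (d * d) = (\<alpha> * \<alpha>) * (2 * d + \<beta>)"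
    using \<open>d > 0\<close> by (simp add: field_simps)
  moreover have "(\<alpha> * \<alpha>) * (2 * d + \<beta>) > 0"
    using \<open>\<alpha> \<noteq> 0\<close> \<open>2 * d + \<beta> > 0\<close> by (metis mult_pos_pos not_real_square_gt_zero)
  moreover have "(2 * (\<alpha> / d) * \<alpha> + (\<alpha> / d) * (\<alpha> / d) * \<beta>) * (d * d) \<le> 0"
    using assms[of "\<alpha> / d"] \<open>d > 0\<close> by (simp add: mult_nonpos_nonneg)
  ultimately show False
    by simp
qed

lemma binary_quartic_coeffs_zero:
  fixes D A B :: "'b::euclidean_space"
  assumes "\<And>a b. (a * a * b * b) *\<^sub>R D + (2 * a * a * a * b) *\<^sub>R A + (2 * a * b * b * b) *\<^sub>R B = 0"
  shows "D = 0" and "A = 0" and "B = 0"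
proof -
  have 1: "D + 2 *\<^sub>R A + 2 *\<^sub>R B = 0" and 2: "D - 2 *\<^sub>R A - 2 *\<^sub>R B = 0"
    and 3: "4 *\<^sub>R D + 16 *\<^sub>R A + 4 *\<^sub>R B = 0"
    using assms[of 1 1] assms[of 1 "-1"] assms[of 2 1] by (simp_all add: algebra_simps)
  have "2 *\<^sub>R D = (D + 2 *\<^sub>R A + 2 *\<^sub>R B) + (D - 2 *\<^sub>R A - 2 *\<^sub>R B)"
    by (simp add: algebra_simps scaleR_2)
  with 1 2 show "D = 0"
    by simp
  moreover have "12 *\<^sub>R A = (4 *\<^sub>R D + 16 *\<^sub>R A + 4 *\<^sub>R B) - 2 *\<^sub>R (D + 2 *\<^sub>R A + 2 *\<^sub>R B) - 2 *\<^sub>R D"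
    by (rule euclidean_eqI) (simp add: algebra_simps)
  ultimately show "A = 0"
    using 1 3 by simp
  with \<open>D = 0\<close> 1 show "B = 0"
    by simp
qed

lemma quadratic_form_max_variation:
  fixes f :: "'a::real_inner \<Rightarrow> 'a"
  assumes lin: "linear f" and adj: "\<And>u v. f u \<bullet> v = u \<bullet> f v" and S: "subspace S"
    and vmax: "\<And>u. u \<in> S \<Longrightarrow> norm u = 1 \<Longrightarrow> f u \<bullet> u \<le> f v \<bullet> v"
    and "v \<in> S" and "norm v = 1" and "w \<in> S" and vw: "v \<bullet> w = 0"
  shows "2 * t * (f v \<bullet> w) + t * t * (f w \<bullet> w - (f v \<bullet> v) * (w \<bullet> w)) \<le> 0"
proof -
  define u where "u = v + t *\<^sub>R w"
  have "v \<bullet> v = 1"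
    using \<open>norm v = 1\<close> by (simp add: dot_square_norm)
  with vw have uu: "u \<bullet> u = 1 + t * t * (w \<bullet> w)"
    by (simp add: u_def algebra_simps inner_commute)
  then have "norm u > 0"
    using add_pos_nonneg[of 1 "t * t * (w \<bullet> w)"] by force
  have "u \<in> S"
    unfolding u_def using \<open>v \<in> S\<close> \<open>w \<in> S\<close> S by (intro subspace_add subspace_scale) auto
  then have "(f u \<bullet> u) / (norm u)\<^sup>2 \<le> f v \<bullet> v"
    using vmax[of "u /\<^sub>R norm u"] \<open>norm u > 0\<close> S linear_scale[OF lin]
    by (simp add: subspace_scale power2_eq_square divide_inverse mult_ac)
  then have "f u \<bullet> u \<le> (f v \<bullet> v) * (u \<bullet> u)"
    using \<open>norm u > 0\<close> by (simp add: pos_divide_le_eq dot_square_norm)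
  moreover have "f u \<bullet> u = f v \<bullet> v + 2 * t * (f v \<bullet> w) + t * t * (f w \<bullet> w)"
    using adj[of w v] linear_add[OF lin] linear_scale[OF lin]
    by (simp add: u_def algebra_simps inner_commute)
  ultimately show ?thesis
    using uu by (simp add: algebra_simps)
qed

lemma self_adjoint_unit_eigenvector:
  fixes f :: "'a::euclidean_space \<Rightarrow> 'a"
  assumes lin: "linear f" and adj: "\<And>u v. f u \<bullet> v = u \<bullet> f v"
    and S: "subspace S" and inv: "\<And>s. s \<in> S \<Longrightarrow> f s \<in> S" and "S \<noteq> {0}"
  obtains v where "v \<in> S" and "norm v = 1" and "f v = (v \<bullet> f v) *\<^sub>R v"
proof -
  define K where "K = sphere 0 1 \<inter> S"
  have "compact K"
    unfolding K_def using S by (intro compact_Int_closed closed_subspace) auto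
  obtain s where "s \<in> S" "s \<noteq> 0"
    using \<open>S \<noteq> {0}\<close> S subspace_0 by blast
  then have "s /\<^sub>R norm s \<in> K"
    using S by (auto simp: K_def subspace_scale)
  moreover have "continuous_on K (\<lambda>v. f v \<bullet> v)"
    using lin by (intro continuous_intros linear_continuous_on) (simp add: linear_conv_bounded_linear)
  ultimately obtain v where "v \<in> K" and vmax: "\<And>u. u \<in> K \<Longrightarrow> f u \<bullet> u \<le> f v \<bullet> v"
    using continuous_attains_sup[OF \<open>compact K\<close>] by blast
  then have "v \<in> S" and "norm v = 1" and vv: "v \<bullet> v = 1"
    by (auto simp: K_def dot_square_norm)
  define w where "w = f v - (v \<bullet> f v) *\<^sub>R v"
  have "w \<in> S"
    unfolding w_def using \<open>v \<in> S\<close> inv S by (intro subspace_diff subspace_scale) auto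
  have "v \<bullet> w = 0"
    by (simp add: w_def inner_diff_right vv)
  then have "f v \<bullet> w = w \<bullet> w"
    by (simp add: w_def inner_diff_left inner_commute)
  with quadratic_form_max_variation[OF lin adj S _ \<open>v \<in> S\<close> \<open>norm v = 1\<close> \<open>w \<in> S\<close> \<open>v \<bullet> w = 0\<close>]
  have "2 * t * (w \<bullet> w) + t * t * (f w \<bullet> w - (f v \<bullet> v) * (w \<bullet> w)) \<le> 0" for t
    using vmax by (simp add: K_def)
  then have "w \<bullet> w = 0"
    by (rule quadratic_nonpos_linear_coeff_zero)
  then have "f v = (v \<bullet> f v) *\<^sub>R v"
    by (simp add: w_def)
  with \<open>v \<in> S\<close> \<open>norm v = 1\<close> show thesis
    by (rule that)
qed

lemma self_adjoint_eigenvector_orthogonal_complement: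
  fixes f :: "'a::euclidean_space \<Rightarrow> 'a"
  assumes adj: "\<And>u v. f u \<bullet> v = u \<bullet> f v"
    and S: "subspace S" and inv: "\<And>s. s \<in> S \<Longrightarrow> f s \<in> S"
    and "v \<in> S" and "norm v = 1" and ev: "f v = c *\<^sub>R v"
  defines "S' \<equiv> S \<inter> {w. v \<bullet> w = 0}"
  shows "subspace S'" and "\<And>s. s \<in> S' \<Longrightarrow> f s \<in> S'" and "dim S' < dim S"
    and "\<And>s. s \<in> S \<Longrightarrow> s - (v \<bullet> s) *\<^sub>R v \<in> S'"
proof -
  have "v \<bullet> v = 1"
    using \<open>norm v = 1\<close> by (simp add: dot_square_norm)
  show "subspace S'"
    unfolding S'_def using S by (intro subspace_inter subspace_hyperplane)
  moreover have "S' \<subset> S"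
    using \<open>v \<in> S\<close> \<open>v \<bullet> v = 1\<close> unfolding S'_def by force
  ultimately show "dim S' < dim S"
    using dim_psubset[of S' S] S by (metis span_eq_iff)
  show "f s \<in> S'" if "s \<in> S'" for s
    using that inv adj[of v s] by (simp add: S'_def ev)
  show "s - (v \<bullet> s) *\<^sub>R v \<in> S'" if "s \<in> S" for s
    using that \<open>v \<in> S\<close> \<open>v \<bullet> v = 1\<close> S
    by (auto simp: S'_def inner_diff_right intro: subspace_diff subspace_scale)
qed

lemma self_adjoint_orthonormal_eigenbasis:
  fixes f :: "'a::euclidean_space \<Rightarrow> 'a"
  assumes lin: "linear f" and adj: "\<And>u v. f u \<bullet> v = u \<bullet> f v"
    and "subspace S" and "\<And>s. s \<in> S \<Longrightarrow> f s \<in> S"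
  shows "\<exists>B. B \<subseteq> S \<and> pairwise orthogonal B \<and> (\<forall>b\<in>B. norm b = 1) \<and> span B = S
           \<and> (\<forall>b\<in>B. f b = (b \<bullet> f b) *\<^sub>R b)"
  using assms(3,4)
proof (induction "dim S" arbitrary: S rule: less_induct)
  case less
  show ?case
  proof (cases "S = {0}")
    case True
    then show ?thesis
      by (intro exI[of _ "{}"]) auto
  next
    case False
    then obtain v where "v \<in> S" and "norm v = 1" and ev: "f v = (v \<bullet> f v) *\<^sub>R v"
      using self_adjoint_unit_eigenvector[OF lin adj less.prems] by blast
    define S' where "S' = S \<inter> {w. v \<bullet> w = 0}"
    note S' = self_adjoint_eigenvector_orthogonal_complement[OF adj less.prems \<open>v \<in> S\<close> \<open>norm v = 1\<close> ev,
        folded S'_def]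
    obtain B' where B': "B' \<subseteq> S'" "pairwise orthogonal B'" "\<forall>b\<in>B'. norm b = 1"
      "span B' = S'" "\<forall>b\<in>B'. f b = (b \<bullet> f b) *\<^sub>R b"
      using less.hyps[OF S'(3,1,2)] by blast
    have "span (insert v B') = S"
    proof
      show "span (insert v B') \<subseteq> S"
        using \<open>v \<in> S\<close> B'(1) less.prems(1) by (intro span_minimal) (auto simp: S'_def)
      show "S \<subseteq> span (insert v B')"
      proof
        fix s assume "s \<in> S"
        then have "s - (v \<bullet> s) *\<^sub>R v \<in> span B'"
          using S'(4) B'(4) by simp
        then show "s \<in> span (insert v B')"
          by (auto simp: span_breakdown_eq)
      qed
    qed
    moreover have "pairwise orthogonal (insert v B')"
      using B'(1,2) by (intro pairwise_orthogonal_insert) (auto simp: S'_def orthogonal_def)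
    ultimately show ?thesis
      using \<open>v \<in> S\<close> \<open>norm v = 1\<close> ev B'(1,3,5)
      by (intro exI[of _ "insert v B'"]) (auto simp: S'_def)
  qed
qed

definition orthonormal_upto :: "nat \<Rightarrow> (nat \<Rightarrow> 'a::real_inner) \<Rightarrow> bool" where
  "orthonormal_upto n e \<longleftrightarrow> (\<forall>i<n. \<forall>j<n. e i \<bullet> e j = (if i = j then 1 else 0))"

lemma orthonormal_upto_enumeration:
  fixes h :: "nat \<Rightarrow> 'a::real_inner"
  assumes "pairwise orthogonal F" and "\<And>b. b \<in> F \<Longrightarrow> norm b = 1" and "bij_betw h {0..<n} F"
  shows "orthonormal_upto n h"
  unfolding orthonormal_upto_def
proof (intro allI impI)
  fix i j assume "i < n" "j < n"
  moreover from this have "h i \<in> F" "h j \<in> F" "h i = h j \<longleftrightarrow> i = j"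
    using assms(3) by (auto simp: bij_betw_def inj_on_def)
  ultimately show "h i \<bullet> h j = (if i = j then 1 else 0)"
    using assms(1,2) by (auto simp: pairwise_def orthogonal_def dot_square_norm)
qed

lemma self_adjoint_image_eigenbasis:
  fixes f :: "'a::euclidean_space \<Rightarrow> 'a"
  assumes lin: "linear f" and adj: "\<And>u v. f u \<bullet> v = u \<bullet> f v"
  obtains r h lam where "orthonormal_upto r h"
    and "\<And>i. i < r \<Longrightarrow> f (h i) = lam i *\<^sub>R h i" and "\<And>i. i < r \<Longrightarrow> lam i \<noteq> 0"
    and "\<And>w. (\<And>i. i < r \<Longrightarrow> h i \<bullet> w = 0) \<Longrightarrow> f w = 0"
proof -
  obtain B where B: "pairwise orthogonal B" "\<forall>b\<in>B. norm b = 1" "span B = UNIV"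
      "\<forall>b\<in>B. f b = (b \<bullet> f b) *\<^sub>R b"
    using self_adjoint_orthonormal_eigenbasis[OF lin adj, of UNIV] by auto
  define F where "F = {b\<in>B. f b \<noteq> 0}"
  have "finite B"
    using B(1) pairwise_orthogonal_imp_finite by blast
  then have "finite F"
    by (simp add: F_def)
  then obtain h where h: "bij_betw h {0..<card F} F"
    using ex_bij_betw_nat_finite by blast
  define lam where "lam i = h i \<bullet> f (h i)" for i
  have hF: "h i \<in> F" if "i < card F" for i
    using that h by (auto simp: bij_betw_def)
  have eig: "f (h i) = lam i *\<^sub>R h i" and "lam i \<noteq> 0" if "i < card F" for i
    using hF[OF that] B(4) by (auto simp: F_def lam_def)
  have "orthonormal_upto (card F) h"
    using B(1,2) h by (intro orthonormal_upto_enumeration[of F]) (auto simp: F_def pairwise_def)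
  moreover have "f w = 0" if perp: "\<And>i. i < card F \<Longrightarrow> h i \<bullet> w = 0" for w
  proof -
    have "orthogonal (f w) b" if "b \<in> B" for b
    proof (cases "b \<in> F")
      case True
      then have "b \<in> h ` {0..<card F}"
        using h by (simp add: bij_betw_def)
      then obtain i where "i < card F" "b = h i"
        by auto
      then show ?thesis
        using perp eig adj[of w b] by (simp add: orthogonal_def inner_commute)
    next
      case False
      then show ?thesis
        using that adj[of w b] by (simp add: F_def orthogonal_def)
    qed
    then have "orthogonal (f w) (f w)"
      using orthogonal_to_span[of "f w" B "f w"] B(3) by auto
    then show ?thesis
      by (simp add: orthogonal_def)
  qed
  ultimately show thesis
    using that eig \<open>\<And>i. i < card F \<Longrightarrow> lam i \<noteq> 0\<close> by blast
qed

lemma orthonormal_upto_complement: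
  fixes f :: "nat \<Rightarrow> 'a::euclidean_space"
  assumes f: "orthonormal_upto n f"
  obtains k where "n \<le> DIM('a)" and "orthonormal_upto (DIM('a) - n) k"
    and "\<And>i j. i < n \<Longrightarrow> j < DIM('a) - n \<Longrightarrow> f i \<bullet> k j = 0"
proof -
  let ?T = "f ` {..<n}"
  let ?W = "{w. \<forall>t\<in>span ?T. orthogonal t w}"
  have "inj_on f {..<n}"
    using f by (intro inj_onI) (metis lessThan_iff orthonormal_upto_def zero_neq_one)
  have "pairwise orthogonal ?T" and "0 \<notin> ?T"
    using f by (auto simp: orthonormal_upto_def pairwise_def orthogonal_def)
      (metis zero_neq_one inner_zero_left)
  then have "independent ?T"
    by (rule pairwise_orthogonal_independent)
  then have "dim (span ?T) = n"
    using \<open>inj_on f {..<n}\<close> by (simp add: dim_eq_card_independent card_image)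
  moreover have "dim ?W + dim (span ?T) = DIM('a)"
    using dim_subspace_orthogonal_to_vectors[of "span ?T" UNIV] by simp
  moreover obtain B where "B \<subseteq> ?W" and "pairwise orthogonal B" and B1: "\<And>b. b \<in> B \<Longrightarrow> norm b = 1"
    and "independent B" and "card B = dim ?W" and "span B = ?W"
    by (rule orthonormal_basis_subspace[OF subspace_orthogonal_to_vectors[of "span ?T"]]) blast
  ultimately have "card B = DIM('a) - n" and "n \<le> DIM('a)"
    by linarith+
  obtain k where k: "bij_betw k {0..<card B} B"
    using ex_bij_betw_nat_finite \<open>independent B\<close> independent_imp_finite by blast
  have "orthonormal_upto (DIM('a) - n) k"
    using orthonormal_upto_enumeration[OF \<open>pairwise orthogonal B\<close> B1 k] \<open>card B = DIM('a) - n\<close>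
    by simp
  moreover have "f i \<bullet> k j = 0" if "i < n" "j < DIM('a) - n" for i j
  proof -
    have "k j \<in> B"
      using k that(2) \<open>card B = DIM('a) - n\<close> by (auto simp: bij_betw_def)
    then show ?thesis
      using that(1) \<open>B \<subseteq> ?W\<close> by (auto simp: orthogonal_def intro: span_base)
  qed
  ultimately show thesis
    using that \<open>n \<le> DIM('a)\<close> by blast
qed

lemma orthonormal_upto_extend:
  fixes f :: "nat \<Rightarrow> 'a::euclidean_space"
  assumes "orthonormal_upto n f"
  obtains e where "n \<le> DIM('a)" and "\<And>i. i < n \<Longrightarrow> e i = f i" and "orthonormal_upto DIM('a) e"
proof -
  obtain k where "n \<le> DIM('a)" and k: "orthonormal_upto (DIM('a) - n) k"
    and perp: "\<And>i j. i < n \<Longrightarrow> j < DIM('a) - n \<Longrightarrow> f i \<bullet> k j = 0"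
    using orthonormal_upto_complement[OF assms] by blast
  define e where "e i = (if i < n then f i else k (i - n))" for i
  have "orthonormal_upto DIM('a) e"
    unfolding orthonormal_upto_def
  proof (intro allI impI)
    fix i j assume "i < DIM('a)" "j < DIM('a)"
    then consider "i < n" "j < n" | "i < n" "n \<le> j" | "n \<le> i" "j < n" | "n \<le> i" "n \<le> j"
      by linarith
    then show "e i \<bullet> e j = (if i = j then 1 else 0)"
    proof cases
      case 1
      then show ?thesis
        using assms by (simp add: e_def orthonormal_upto_def)
    next
      case 2
      then show ?thesis
        using perp[of i "j - n"] \<open>j < DIM('a)\<close> by (simp add: e_def)
    next
      case 3
      then show ?thesis
        using perp[of j "i - n"] \<open>i < DIM('a)\<close> by (simp add: e_def inner_commute)
    next
      case 4
      then show ?thesis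
        using k \<open>i < DIM('a)\<close> \<open>j < DIM('a)\<close> by (auto simp: e_def orthonormal_upto_def)
    qed
  qed
  then show thesis
    using that[OF \<open>n \<le> DIM('a)\<close>, of e] by (simp add: e_def)
qed

text \<open>X, Y and P stand for J(x), J(y) and J(x,y); the assumptions are parts (1) and (2).\<close>

locale jacobi_triple =
  fixes X Y P :: "'a::euclidean_space \<Rightarrow> 'a"
  assumes linear_X: "linear X" and linear_Y: "linear Y" and linear_P: "linear P"
    and adjoint_X: "\<And>u v. X u \<bullet> v = u \<bullet> X v"
    and adjoint_Y: "\<And>u v. Y u \<bullet> v = u \<bullet> Y v"
    and adjoint_P: "\<And>u v. P u \<bullet> v = u \<bullet> P v"
    and XY: "\<And>v. X (Y v) = 0" and YX: "\<And>v. Y (X v) = 0"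
    and PX: "\<And>v. P (X v) = Y (P v)" and XP: "\<And>v. X (P v) = P (Y v)"
    and PP: "\<And>v. 4 *\<^sub>R P (P v) = X (X v) + Y (Y v)"
begin

lemmas linear_XYP_simps [simp] =
  linear_add[OF linear_X] linear_scale[OF linear_X] linear_0[OF linear_X]
  linear_add[OF linear_Y] linear_scale[OF linear_Y] linear_0[OF linear_Y]
  linear_add[OF linear_P] linear_scale[OF linear_P] linear_0[OF linear_P]

definition partner :: "real \<Rightarrow> 'a \<Rightarrow> 'a" where
  "partner l h = (2 / l) *\<^sub>R P h"

lemma partner_eigen:
  assumes Xh: "X h = l *\<^sub>R h" and "l \<noteq> 0"
  shows "Y h = 0" and "P h = (l / 2) *\<^sub>R partner l h" and "X (partner l h) = 0"
    and "Y (partner l h) = l *\<^sub>R partner l h" and "P (partner l h) = (l / 2) *\<^sub>R h"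
proof -
  have "h = (1 / l) *\<^sub>R X h"
    using Xh \<open>l \<noteq> 0\<close> by simp
  then have "Y h = Y ((1 / l) *\<^sub>R X h)"
    by (rule arg_cong)
  then show Yh: "Y h = 0"
    by (simp add: YX)
  show "P h = (l / 2) *\<^sub>R partner l h"
    using \<open>l \<noteq> 0\<close> by (simp add: partner_def)
  show "X (partner l h) = 0"
    by (simp add: partner_def XP Yh)
  show "Y (partner l h) = l *\<^sub>R partner l h"
    by (simp add: partner_def flip: PX add: Xh)
  have "P (P h) = (1 / 4) *\<^sub>R (4 *\<^sub>R P (P h))"
    by simp
  also have "\<dots> = (l * l / 4) *\<^sub>R h"
    by (simp add: PP Xh Yh)
  finally have "P (partner l h) = (2 / l * (l * l / 4)) *\<^sub>R h"
    by (simp add: partner_def)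
  moreover have "2 / l * (l * l / 4) = l / 2"
    using \<open>l \<noteq> 0\<close> by simp
  ultimately show "P (partner l h) = (l / 2) *\<^sub>R h"
    by simp
qed

lemma partner_inner:
  assumes "X h = l *\<^sub>R h" "l \<noteq> 0" and "X h' = l' *\<^sub>R h'" "l' \<noteq> 0"
  shows "partner l h \<bullet> partner l' h' = (l' / l) * (h \<bullet> h')"
    and "h \<bullet> partner l' h' = 0"
proof -
  have "partner l h \<bullet> partner l' h' = (2 / l) * (h \<bullet> P (partner l' h'))"
    by (simp add: partner_def adjoint_P)
  then show "partner l h \<bullet> partner l' h' = (l' / l) * (h \<bullet> h')"
    using partner_eigen(5)[OF assms(3,4)] by simp
  have "h \<bullet> partner l' h' = (1 / l) * (X h \<bullet> partner l' h')"
    using assms(1,2) by simp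
  also have "\<dots> = 0"
    using partner_eigen(3)[OF assms(3,4)] by (simp add: adjoint_X)
  finally show "h \<bullet> partner l' h' = 0" .
qed

text \<open>On a set killed by X and invariant under Y and P, the relations make Y nilpotent; being
  self-adjoint it vanishes, and then so does P.\<close>

lemma invariant_kernel_annihilated:
  assumes X0: "\<And>w. w \<in> K \<Longrightarrow> X w = 0"
    and Y_inv: "\<And>w. w \<in> K \<Longrightarrow> Y w \<in> K" and P_inv: "\<And>w. w \<in> K \<Longrightarrow> P w \<in> K"
    and "w \<in> K"
  shows "Y w = 0" and "P w = 0"
proof -
  have "P (Y w) = 0"
    using X0[OF P_inv[OF \<open>w \<in> K\<close>]] by (simp add: XP)
  then have "Y (Y (Y w)) = 0"
    using PP[of "Y w"] XY by simp
  then have "Y (Y w) \<bullet> Y (Y w) = 0"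
    using adjoint_Y[of "Y w" "Y (Y w)"] by simp
  then have "Y w \<bullet> Y w = 0"
    using adjoint_Y[of w "Y w"] by simp
  then show Yw: "Y w = 0"
    by simp
  have "P (P w) = 0"
    using PP[of w] X0[OF \<open>w \<in> K\<close>] Yw by simp
  then have "P w \<bullet> P w = 0"
    using adjoint_P[of w "P w"] by simp
  then show "P w = 0"
    by simp
qed

lemma orthonormal_with_partners:
  assumes h: "orthonormal_upto r h" and eig: "\<And>i. i < r \<Longrightarrow> X (h i) = lam i *\<^sub>R h i"
    and lam: "\<And>i. i < r \<Longrightarrow> lam i \<noteq> 0"
  shows "orthonormal_upto (2 * r) (\<lambda>i. if i < r then h i else partner (lam (i - r)) (h (i - r)))"
proof -
  let ?g = "\<lambda>i. partner (lam i) (h i)"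
  have hh: "h i \<bullet> h j = (if i = j then 1 else 0)" if "i < r" "j < r" for i j
    using h that by (simp add: orthonormal_upto_def)
  have "?g i \<bullet> ?g j = (if i = j then 1 else 0)" and "h i \<bullet> ?g j = 0" and "?g j \<bullet> h i = 0"
    if "i < r" "j < r" for i j
    using partner_inner[OF eig[OF that(1)] lam[OF that(1)] eig[OF that(2)] lam[OF that(2)]] hh[OF that] lam[OF that(1)]
    by (auto simp: inner_commute)
  with hh show ?thesis
    unfolding orthonormal_upto_def by auto
qed

lemma orthogonal_to_partners_annihilated:
  assumes eig: "\<And>i. i < r \<Longrightarrow> X (h i) = lam i *\<^sub>R h i" and lam: "\<And>i. i < r \<Longrightarrow> lam i \<noteq> 0"
    and ker: "\<And>w. (\<And>i. i < r \<Longrightarrow> h i \<bullet> w = 0) \<Longrightarrow> X w = 0"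
    and "\<And>i. i < r \<Longrightarrow> h i \<bullet> w = 0" and "\<And>i. i < r \<Longrightarrow> partner (lam i) (h i) \<bullet> w = 0"
  shows "X w = 0" and "Y w = 0" and "P w = 0"
proof -
  define K where "K = {w. \<forall>i<r. h i \<bullet> w = 0 \<and> partner (lam i) (h i) \<bullet> w = 0}"
  note pairs = partner_eigen[OF eig lam]
  have "w \<in> K"
    using assms(4,5) by (simp add: K_def)
  moreover have "X w = 0" if "w \<in> K" for w
    using that ker by (simp add: K_def)
  moreover have "Y w \<in> K" if "w \<in> K" for w
    using that pairs(1,4) by (simp add: K_def flip: adjoint_Y)
  moreover have "P w \<in> K" if "w \<in> K" for w
    using that pairs(2,5) by (simp add: K_def flip: adjoint_P)
  ultimately show "X w = 0" "Y w = 0" "P w = 0"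
    using invariant_kernel_annihilated[of K w] by blast+
qed

theorem block_normal_form:
  "\<exists>e r lam. 2 * r \<le> DIM('a) \<and> orthonormal_upto DIM('a) e \<and> (\<forall>i<r. lam i \<noteq> 0)
    \<and> (\<forall>i<r. X (e i) = lam i *\<^sub>R e i \<and> X (e (r + i)) = 0
           \<and> Y (e i) = 0 \<and> Y (e (r + i)) = lam i *\<^sub>R e (r + i)
           \<and> P (e i) = (lam i / 2) *\<^sub>R e (r + i) \<and> P (e (r + i)) = (lam i / 2) *\<^sub>R e i)
    \<and> (\<forall>i. 2 * r \<le> i \<and> i < DIM('a) \<longrightarrow> X (e i) = 0 \<and> Y (e i) = 0 \<and> P (e i) = 0)"
proof -
  obtain r h lam where h: "orthonormal_upto r h" and eig: "\<And>i. i < r \<Longrightarrow> X (h i) = lam i *\<^sub>R h i"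
    and lam: "\<And>i. i < r \<Longrightarrow> lam i \<noteq> 0" and ker: "\<And>w. (\<And>i. i < r \<Longrightarrow> h i \<bullet> w = 0) \<Longrightarrow> X w = 0"
    by (rule self_adjoint_image_eigenbasis[OF linear_X adjoint_X]) blast
  let ?g = "\<lambda>i. partner (lam i) (h i)"
  define f where "f = (\<lambda>i. if i < r then h i else ?g (i - r))"
  have "orthonormal_upto (2 * r) f"
    unfolding f_def by (rule orthonormal_with_partners[OF h eig lam])
  then obtain e where "2 * r \<le> DIM('a)" and ef: "\<And>i. i < 2 * r \<Longrightarrow> e i = f i"
    and e: "orthonormal_upto DIM('a) e"
    by (rule orthonormal_upto_extend) blast
  have eh: "e i = h i" and eg: "e (r + i) = ?g i" if "i < r" for i
    using ef[of i] ef[of "r + i"] that by (simp_all add: f_def)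
  have "X (e i) = 0 \<and> Y (e i) = 0 \<and> P (e i) = 0" if "2 * r \<le> i" "i < DIM('a)" for i
  proof -
    have orth: "e j \<bullet> e i = 0" if "j < 2 * r" for j
      using e \<open>2 * r \<le> i\<close> \<open>i < DIM('a)\<close> \<open>j < 2 * r\<close> \<open>2 * r \<le> DIM('a)\<close>
      by (auto simp: orthonormal_upto_def)
    have hperp: "h j \<bullet> e i = 0" and gperp: "?g j \<bullet> e i = 0" if "j < r" for j
      using orth[of j] orth[of "r + j"] eh[OF that] eg[OF that] that by simp_all
    show ?thesis
      using orthogonal_to_partners_annihilated[of r h lam "e i", OF eig lam ker hperp gperp] by simp
  qed
  moreover have "X (e i) = lam i *\<^sub>R e i \<and> X (e (r + i)) = 0
           \<and> Y (e i) = 0 \<and> Y (e (r + i)) = lam i *\<^sub>R e (r + i)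
           \<and> P (e i) = (lam i / 2) *\<^sub>R e (r + i) \<and> P (e (r + i)) = (lam i / 2) *\<^sub>R e i"
    if "i < r" for i
    using partner_eigen[OF eig[OF that] lam[OF that]] eig[OF that] by (simp add: eh eg that)
  ultimately show ?thesis
    using \<open>2 * r \<le> DIM('a)\<close> e lam by (intro exI[of _ e] exI[of _ r] exI[of _ lam]) simp
qed

end

section \<open>Algebraic curvature tensors\<close>

locale curvature_tensor =
  fixes R :: "'a::euclidean_space \<Rightarrow> 'a \<Rightarrow> 'a \<Rightarrow> 'a \<Rightarrow> real"
  assumes alg_curv: "alg_curv_tensor R"
begin

lemma multilinear: "multilinear4 R"
  using alg_curv unfolding alg_curv_tensor_def by (rule conjunct1)

lemma linear_R1: "linear (\<lambda>x. R x y z w)"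
  and linear_R2: "linear (\<lambda>y. R x y z w)"
  and linear_R3: "linear (\<lambda>z. R x y z w)"
  and linear_R4: "linear (\<lambda>w. R x y z w)"
  using multilinear by (auto simp: multilinear4_def)

lemmas R_linear_simps [simp] =
  linear_add[OF linear_R1] linear_diff[OF linear_R1] linear_scale[OF linear_R1]
  linear_neg[OF linear_R1] linear_0[OF linear_R1]
  linear_add[OF linear_R2] linear_diff[OF linear_R2] linear_scale[OF linear_R2]
  linear_neg[OF linear_R2] linear_0[OF linear_R2]
  linear_add[OF linear_R3] linear_diff[OF linear_R3] linear_scale[OF linear_R3]
  linear_neg[OF linear_R3] linear_0[OF linear_R3]
  linear_add[OF linear_R4] linear_diff[OF linear_R4] linear_scale[OF linear_R4]
  linear_neg[OF linear_R4] linear_0[OF linear_R4]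

lemma R_pair_symmetric: "R x y z w = R z w x y"
  using alg_curv unfolding alg_curv_tensor_def by blast

lemma R_skew: "R x y z w = - R y x z w"
  using alg_curv unfolding alg_curv_tensor_def by blast

lemma R_skew34: "R x y z w = - R x y w z"
  using R_pair_symmetric[of x y z w] R_skew[of z w x y] R_pair_symmetric[of w z x y] by simp

lemma R_reverse: "R w x y z = R z y x w"
  using R_pair_symmetric[of w x y z] R_skew[of y z w x] R_skew34[of z y w x] by simp

lemma R_same12 [simp]: "R x x z w = 0"
  and R_same34 [simp]: "R x y z z = 0"
  using R_skew[of x x z w] R_skew34[of x y z z] by simp_all

lemma inner_curv_op [simp]: "curv_op R x y z \<bullet> w = R x y z w"
proof -
  have "curv_op R x y z \<bullet> w = (\<Sum>b\<in>Basis. R x y z b * (b \<bullet> w))"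
    unfolding curv_op_def inner_sum_left inner_scaleR_left ..
  also have "\<dots> = R x y z (\<Sum>b\<in>Basis. (w \<bullet> b) *\<^sub>R b)"
    by (simp add: linear_sum[OF linear_R4] inner_commute mult.commute)
  finally show ?thesis
    by (simp add: euclidean_representation)
qed

lemma inner_jacobi_op [simp]: "jacobi_op R u a \<bullet> b = R a u u b"
  by (simp add: jacobi_op_def)

lemma inner_pjacobi_op [simp]: "pjacobi_op R u v a \<bullet> b = (R a u v b + R a v u b) / 2"
  by (simp add: pjacobi_op_def inner_add_left)

lemma linear_jacobi_op: "linear (jacobi_op R u)"
  by (rule linearI; rule euclidean_eqI) (simp_all add: inner_add_left)

lemma linear_pjacobi_op: "linear (pjacobi_op R u v)"
  by (rule linearI; rule euclidean_eqI) (simp_all add: inner_add_left add_divide_distrib distrib_left)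

lemmas jacobi_op_linear_simps [simp] =
  linear_add[OF linear_jacobi_op] linear_diff[OF linear_jacobi_op]
  linear_scale[OF linear_jacobi_op] linear_neg[OF linear_jacobi_op] linear_0[OF linear_jacobi_op]
  linear_add[OF linear_pjacobi_op] linear_diff[OF linear_pjacobi_op]
  linear_scale[OF linear_pjacobi_op] linear_neg[OF linear_pjacobi_op] linear_0[OF linear_pjacobi_op]

lemma jacobi_op_self [simp]: "jacobi_op R u u = 0"
  and jacobi_op_0 [simp]: "jacobi_op R 0 a = 0"
  by (simp_all add: euclidean_eqI)

lemma jacobi_op_self_adjoint: "jacobi_op R u a \<bullet> b = a \<bullet> jacobi_op R u b"
  using R_reverse[of a u u b] by (simp add: inner_commute[of a])

lemma pjacobi_op_self_adjoint: "pjacobi_op R u v a \<bullet> b = a \<bullet> pjacobi_op R u v b"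
  using R_reverse[of a u v b] R_reverse[of a v u b] by (simp add: inner_commute[of a])

lemma jacobi_op_lincomb:
  "jacobi_op R (a *\<^sub>R x + b *\<^sub>R y) w =
     (a * a) *\<^sub>R jacobi_op R x w + (2 * a * b) *\<^sub>R pjacobi_op R x y w + (b * b) *\<^sub>R jacobi_op R y w"
  by (rule euclidean_eqI) (simp add: inner_add_left distrib_left distrib_right add_divide_distrib)

lemma jacobi_op_add:
  "jacobi_op R (x + y) w = jacobi_op R x w + 2 *\<^sub>R pjacobi_op R x y w + jacobi_op R y w"
  using jacobi_op_lincomb[of 1 x 1 y w] by simp

lemma jacobi_op_plane_zero:
  assumes "jacobi_op R x y = 0" and "jacobi_op R y x = 0"
  shows "jacobi_op R (a *\<^sub>R x + b *\<^sub>R y) (c *\<^sub>R x + d *\<^sub>R y) = 0"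
proof (rule euclidean_eqI)
  fix t
  have "R y x x t = 0" and "R x y y t = 0"
    using inner_jacobi_op[of x y t] inner_jacobi_op[of y x t] assms by simp_all
  moreover from this have "R x y x t = 0" and "R y x y t = 0"
    using R_skew[of x y x t] R_skew[of y x y t] by simp_all
  ultimately show "jacobi_op R (a *\<^sub>R x + b *\<^sub>R y) (c *\<^sub>R x + d *\<^sub>R y) \<bullet> t = 0 \<bullet> t"
    by (simp add: inner_add_left)
qed

end

section \<open>Jacobi-Tsankov tensors\<close>

locale jacobi_tsankov_tensor = curvature_tensor +
  assumes jacobi_tsankov: "jacobi_tsankov R"
begin

lemma jacobi_op_commute:
  "u \<bullet> v = 0 \<Longrightarrow> jacobi_op R u (jacobi_op R v a) = jacobi_op R v (jacobi_op R u a)"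
  using jacobi_tsankov unfolding jacobi_tsankov_def by (metis comp_apply)

lemma jacobi_op_pjacobi_op_commute:
  assumes "x \<bullet> a = 0" and "x \<bullet> b = 0"
  shows "jacobi_op R x (pjacobi_op R a b z) = pjacobi_op R a b (jacobi_op R x z)"
proof -
  have "x \<bullet> (a + b) = 0"
    using assms by (simp add: inner_add_right)
  with assms show ?thesis
    using jacobi_op_commute[of x a z] jacobi_op_commute[of x b z] jacobi_op_commute[of x "a + b" z]
    by (simp add: jacobi_op_add)
qed

lemma jacobi_op_comp_zero:
  assumes "x \<bullet> y = 0" and "jacobi_op R x y = 0"
  shows "jacobi_op R y (jacobi_op R x u) = 0"
proof (cases "x = 0")
  case False
  let ?v = "jacobi_op R x u"
  have orth: "R ?v y y w = 0" if "x \<bullet> w = 0" for w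
  proof -
    have "pjacobi_op R y w ?v \<bullet> y = jacobi_op R x (pjacobi_op R y w u) \<bullet> y"
      using jacobi_op_pjacobi_op_commute[OF assms(1) that] by simp
    also have "\<dots> = 0"
      using assms(2) by (simp only: jacobi_op_self_adjoint inner_zero_right)
    finally show ?thesis
      using R_skew34[of ?v y y w] by simp
  qed
  have along: "R ?v y y x = 0"
  proof -
    have "R ?v y y x = jacobi_op R y ?v \<bullet> x"
      by simp
    also have "\<dots> = ?v \<bullet> jacobi_op R y x"
      by (rule jacobi_op_self_adjoint)
    also have "\<dots> = u \<bullet> jacobi_op R x (jacobi_op R y x)"
      by (rule jacobi_op_self_adjoint)
    also have "\<dots> = 0"
      using jacobi_op_commute[OF assms(1), of x] by simp
    finally show ?thesis .
  qed
  show ?thesis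
  proof (rule euclidean_eqI)
    fix t
    let ?c = "(x \<bullet> t) / (x \<bullet> x)"
    have "x \<bullet> (t - ?c *\<^sub>R x) = 0"
      using False by (simp add: inner_diff_right)
    then have "R ?v y y (t - ?c *\<^sub>R x) = 0"
      by (rule orth)
    with along show "jacobi_op R y ?v \<bullet> t = 0 \<bullet> t"
      by simp
  qed
qed simp

lemma jacobi_op_zero_swap:
  assumes "x \<bullet> y = 0" and "x \<bullet> x = y \<bullet> y" and "jacobi_op R x y = 0"
  shows "jacobi_op R y x = 0"
proof -
  let ?p = "pjacobi_op R x y y"
  have p: "?p = - (1 / 2) *\<^sub>R jacobi_op R y x"
    by (rule euclidean_eqI) (simp add: R_skew[of y x])
  have orth: "(x + y) \<bullet> (y - x) = 0"
    using assms(1,2) by (simp add: algebra_simps inner_commute)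
  have plus: "jacobi_op R (x + y) w = jacobi_op R x w + 2 *\<^sub>R pjacobi_op R x y w + jacobi_op R y w"
    and minus: "jacobi_op R (y - x) w = jacobi_op R x w - 2 *\<^sub>R pjacobi_op R x y w + jacobi_op R y w"
    for w
    using jacobi_op_lincomb[of 1 x 1 y w] jacobi_op_lincomb[of "-1" x 1 y w] by simp_all
  have "jacobi_op R (x + y) (jacobi_op R (y - x) y) = jacobi_op R (y - x) (jacobi_op R (x + y) y)"
    by (rule jacobi_op_commute[OF orth])
  then have "2 *\<^sub>R jacobi_op R (y - x) ?p - (-2) *\<^sub>R jacobi_op R (x + y) ?p = 0"
    using assms(3) by (simp add: plus minus)
  moreover have "2 *\<^sub>R jacobi_op R (y - x) ?p - (-2) *\<^sub>R jacobi_op R (x + y) ?p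
      = 4 *\<^sub>R (jacobi_op R x ?p + jacobi_op R y ?p)"
    by (rule euclidean_eqI) (simp add: plus minus algebra_simps)
  ultimately have "4 *\<^sub>R (jacobi_op R x ?p + jacobi_op R y ?p) = 0"
    by simp
  moreover have "jacobi_op R x ?p = 0"
    using jacobi_op_comp_zero[OF assms(1,3)] jacobi_op_commute[OF assms(1)] by (simp add: p)
  ultimately have "jacobi_op R y (jacobi_op R y x) = 0"
    by (simp add: p)
  then have "jacobi_op R y x \<bullet> jacobi_op R y x = 0"
    by (simp only: jacobi_op_self_adjoint inner_zero_right)
  then show ?thesis
    by (simp only: inner_eq_zero_iff)
qed

lemma jacobi_pair_relations:
  assumes "x \<bullet> y = 0" and "x \<bullet> x = y \<bullet> y" and "jacobi_op R x y = 0"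
  shows "jacobi_op R y (jacobi_op R y v) + jacobi_op R x (jacobi_op R x v)
           - 4 *\<^sub>R pjacobi_op R x y (pjacobi_op R x y v) = 0"
    and "pjacobi_op R x y (jacobi_op R x v) = jacobi_op R y (pjacobi_op R x y v)"
    and "jacobi_op R x (pjacobi_op R x y v) = pjacobi_op R x y (jacobi_op R y v)"
proof -
  let ?X = "jacobi_op R x" and ?Y = "jacobi_op R y" and ?P = "pjacobi_op R x y"
  have XY: "?X (?Y w) = 0" and YX: "?Y (?X w) = 0" for w
    using jacobi_op_comp_zero[OF assms(1,3)] jacobi_op_commute[OF assms(1)] by simp_all
  have "(a * a * b * b) *\<^sub>R (?X (?X v) + ?Y (?Y v) - 4 *\<^sub>R ?P (?P v))
      + (2 * a * a * a * b) *\<^sub>R (?Y (?P v) - ?P (?X v))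
      + (2 * a * b * b * b) *\<^sub>R (?X (?P v) - ?P (?Y v)) = 0" for a b
  proof -
    let ?u = "a *\<^sub>R x + b *\<^sub>R y" and ?w = "(- b) *\<^sub>R x + a *\<^sub>R y"
    have "?u \<bullet> ?w = 0"
      using assms(1,2) by (simp add: algebra_simps inner_commute)
    moreover have "jacobi_op R ?u ?w = 0"
      using jacobi_op_plane_zero[OF assms(3) jacobi_op_zero_swap[OF assms]] .
    ultimately have "jacobi_op R ?w (jacobi_op R ?u v) = 0"
      by (rule jacobi_op_comp_zero)
    moreover have "jacobi_op R ?w (jacobi_op R ?u v) =
        (a * a * b * b) *\<^sub>R (?X (?X v) + ?Y (?Y v) - 4 *\<^sub>R ?P (?P v))
      + (2 * a * a * a * b) *\<^sub>R (?Y (?P v) - ?P (?X v))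
      + (2 * a * b * b * b) *\<^sub>R (?X (?P v) - ?P (?Y v))"
      unfolding jacobi_op_lincomb
      by (rule euclidean_eqI) (simp add: XY YX algebra_simps)
    ultimately show ?thesis
      by simp
  qed
  then have "?X (?X v) + ?Y (?Y v) - 4 *\<^sub>R ?P (?P v) = 0"
    and "?Y (?P v) - ?P (?X v) = 0" and "?X (?P v) - ?P (?Y v) = 0"
    by (rule binary_quartic_coeffs_zero)+
  then show "?Y (?Y v) + ?X (?X v) - 4 *\<^sub>R ?P (?P v) = 0"
    and "?P (?X v) = ?Y (?P v)" and "?X (?P v) = ?P (?Y v)"
    by (simp_all add: algebra_simps)
qed

lemma jacobi_op_distinct_eigenvectors_zero:
  assumes "x \<bullet> z1 = 0" and "x \<bullet> z2 = 0"
    and "jacobi_op R x z1 = l1 *\<^sub>R z1" and "jacobi_op R x z2 = l2 *\<^sub>R z2" and "l1 \<noteq> l2"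
  shows "jacobi_op R z1 z2 = 0"
proof -
  let ?v = "jacobi_op R z1 z2" and ?q = "pjacobi_op R z2 z1 z1"
  have "jacobi_op R x ?v = l2 *\<^sub>R ?v"
    using jacobi_op_commute[OF assms(1)] assms(4) by simp
  then have "l2 * (?q \<bullet> ?v) = ?q \<bullet> jacobi_op R x ?v"
    by simp
  also have "\<dots> = jacobi_op R x ?q \<bullet> ?v"
    by (simp only: jacobi_op_self_adjoint)
  also have "\<dots> = l1 * (?q \<bullet> ?v)"
    using jacobi_op_pjacobi_op_commute[OF assms(2,1)] assms(3) by simp
  finally have "?q \<bullet> ?v = 0"
    using assms(5) by simp
  then have "R z1 z2 z1 ?v = 0"
    by simp
  then have "?v \<bullet> ?v = 0"
    using R_skew[of z2 z1 z1 ?v] by simp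
  then show ?thesis
    by (simp only: inner_eq_zero_iff)
qed

lemma jacobi_triple_jacobi_ops:
  assumes "x \<bullet> y = 0" and "x \<bullet> x = y \<bullet> y" and "jacobi_op R x y = 0"
  shows "jacobi_triple (jacobi_op R x) (jacobi_op R y) (pjacobi_op R x y)"
proof (rule jacobi_triple.intro)
  fix v
  show "jacobi_op R x (jacobi_op R y v) = 0" and "jacobi_op R y (jacobi_op R x v) = 0"
    using jacobi_op_comp_zero[OF assms(1,3)] jacobi_op_commute[OF assms(1)] by simp_all
  show "pjacobi_op R x y (jacobi_op R x v) = jacobi_op R y (pjacobi_op R x y v)"
    and "jacobi_op R x (pjacobi_op R x y v) = pjacobi_op R x y (jacobi_op R y v)"
    using jacobi_pair_relations[OF assms] by simp_all
  show "4 *\<^sub>R pjacobi_op R x y (pjacobi_op R x y v)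
      = jacobi_op R x (jacobi_op R x v) + jacobi_op R y (jacobi_op R y v)"
    using jacobi_pair_relations(1)[OF assms, of v] by (simp add: algebra_simps)
qed (rule linear_jacobi_op linear_pjacobi_op jacobi_op_self_adjoint pjacobi_op_self_adjoint)+

end

theorem lemma2p2:
  fixes R :: "'a::euclidean_space \<Rightarrow> 'a \<Rightarrow> 'a \<Rightarrow> 'a \<Rightarrow> real"
    and x y :: 'a
  assumes dim: "DIM('a) \<ge> 3"
    and acr: "alg_curv_tensor R"
    and jt: "jacobi_tsankov R"
    and rk: "\<forall>v. jrank R v < DIM('a) - 1"
    and x: "norm x = 1"
    and y: "norm y = 1" "x \<bullet> y = 0" "jacobi_op R x y = 0"
  shows
    \<comment> \<open>(1)\<close>
    "(jacobi_op R y x = 0 \<and> jacobi_op R x \<circ> jacobi_op R y = (\<lambda>_. 0)) \<and>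
    \<comment> \<open>(2)\<close>
    ((\<forall>v. jacobi_op R y (jacobi_op R y v) + jacobi_op R x (jacobi_op R x v)
             - 4 *\<^sub>R pjacobi_op R x y (pjacobi_op R x y v) = 0)
     \<and> pjacobi_op R x y \<circ> jacobi_op R x = jacobi_op R y \<circ> pjacobi_op R x y
     \<and> jacobi_op R x \<circ> pjacobi_op R x y = pjacobi_op R x y \<circ> jacobi_op R y) \<and>
    \<comment> \<open>(3)\<close>
    (\<forall>z1 z2 l1 l2. norm z1 = 1 \<and> norm z2 = 1 \<and> x \<bullet> z1 = 0 \<and> x \<bullet> z2 = 0 \<and> z1 \<bullet> z2 = 0
        \<and> jacobi_op R x z1 = l1 *\<^sub>R z1 \<and> jacobi_op R x z2 = l2 *\<^sub>R z2 \<and> l1 \<noteq> l2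
        \<longrightarrow> jacobi_op R z1 z2 = 0) \<and>
    \<comment> \<open>(4)\<close>
    (\<exists>(e::nat \<Rightarrow> 'a) (r::nat) (lam::nat \<Rightarrow> real).
        2 * r \<le> DIM('a)
      \<and> (\<forall>i<DIM('a). \<forall>j<DIM('a). e i \<bullet> e j = (if i = j then 1 else 0))
      \<and> (\<forall>i<r. lam i \<noteq> 0)
      \<and> (\<forall>i<r. jacobi_op R x (e i) = lam i *\<^sub>R e i
              \<and> jacobi_op R x (e (r + i)) = 0
              \<and> jacobi_op R y (e i) = 0
              \<and> jacobi_op R y (e (r + i)) = lam i *\<^sub>R e (r + i)
              \<and> pjacobi_op R x y (e i) = (lam i / 2) *\<^sub>R e (r + i)
              \<and> pjacobi_op R x y (e (r + i)) = (lam i / 2) *\<^sub>R e i)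
      \<and> (\<forall>i. 2 * r \<le> i \<and> i < DIM('a) \<longrightarrow>
              jacobi_op R x (e i) = 0 \<and> jacobi_op R y (e i) = 0 \<and> pjacobi_op R x y (e i) = 0))"
proof -
  \<comment> \<open>The hypotheses dim and rk only serve to guarantee that a vector y as assumed exists.\<close>
  interpret jacobi_tsankov_tensor R
    using acr jt by unfold_locales
  have xy: "x \<bullet> x = y \<bullet> y"
    using x y(1) by (simp add: dot_square_norm)
  interpret T: jacobi_triple "jacobi_op R x" "jacobi_op R y" "pjacobi_op R x y"
    by (rule jacobi_triple_jacobi_ops[OF y(2) xy y(3)])
  show ?thesis
    using jacobi_op_zero_swap[OF y(2) xy y(3)] jacobi_pair_relations(1)[OF y(2) xy y(3)]
      jacobi_op_distinct_eigenvectors_zero[of x] T.block_normal_form[unfolded orthonormal_upto_def]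
    by (intro conjI) (simp_all add: fun_eq_iff T.XY T.PX T.XP, blast)
qed

end
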